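(* Let $\mathsf{M}=(E,\mathcal{L})$ be a loopless matroid, let $F_1,\dots,F_k\in\mathcal{L}^*$ be distinct proper flats and let $d_1,\dots,d_k$ be positive integers. Then in $A^*(\mathsf{M})$: if, after possibly relabeling, $F_1,\dots,F_k$ form a flag $\mathcal{F}=(\emptyset\subsetneq F_1\subsetneq\dots\subsetneq F_k\subsetneq E)$, then \[ D_{F_1}^{d_1}\cdots D_{F_k}^{d_k}=D_\mathcal{F}\prod_{i=1}^k(-\psi_{F_i}^--\psi_{F_i}^+)^{d_i-1}, \] where $D_\mathcal{F}=D_{F_1}\cdots D_{F_k}$; and if $F_i$ and $F_j$ are incomparable for some $i,j$, then $D_{F_1}^{d_1}\cdots D_{F_k}^{d_k}=0$.
   Context: A matroid $\mathsf{M}=(E,\mathcal{L})$ consists of a finite ground set $E$ and a collection $\mathcal{L}\subseteq 2^E$ of flats such that (1) the intersection of two flats is a flat, and (2) for every flat $F$, every element of $E\setminus F$ lies in exactly one flat that is minimal among flats strictly containing $F$. It is loopless if $\emptyset\in\mathcal{L}$. Write $\mathcal{L}^*=\mathcal{L}\setminus\{\emptyset,E\}$. The Chow ring is $A^*(\mathsf{M})=\mathbb{Z}[X_F\mid F\in\mathcal{L}^*]/(\mathcal{I}+\mathcal{J})$, where $\mathcal{I}$ is generated by $X_{F_1}X_{F_2}$ for incomparable $F_1,F_2$, and $\mathcal{J}$ is generated by $\sum_{F\in\mathcal{L}^*,\,e\in F}X_F-\sum_{F\in\mathcal{L}^*,\,f\in F}X_F$ for $e,f\in E$; $D_F$ is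 the class of $X_F$. For any flat $F\in\mathcal{L}$ and any $e\in E$, \[ \psi_F^-=\sum_{G\in\mathcal{L}^*,\ e\in G}D_G-\sum_{G\in\mathcal{L}^*,\ G\supseteq F}D_G,\qquad \psi_F^+=\sum_{G\in\mathcal{L}^*,\ e\notin G}D_G-\sum_{G\in\mathcal{L}^*,\ G\subseteq F}D_G, \] which are independent of the choice of $e$. *)

theory Defs
  imports Main "HOL-Library.Poly_Mapping"
begin

definition is_cover :: "'e set set \<Rightarrow> 'e set \<Rightarrow> 'e set \<Rightarrow> bool" where
  "is_cover L F G \<longleftrightarrow> G \<in> L \<and> F \<subset> G \<and> \<not> (\<exists>H\<in>L. F \<subset> H \<and> H \<subset> G)"

definition matroid_flats :: "'e set \<Rightarrow> 'e set set \<Rightarrow> bool" where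
  "matroid_flats E L \<longleftrightarrow>
     finite E \<and> L \<subseteq> Pow E \<and>
     (\<forall>F1\<in>L. \<forall>F2\<in>L. F1 \<inter> F2 \<in> L) \<and>
     (\<forall>F\<in>L. \<forall>e\<in>E - F. \<exists>!G. is_cover L F G \<and> e \<in> G)"

definition loopless :: "'e set \<Rightarrow> 'e set set \<Rightarrow> bool" where
  "loopless E L \<longleftrightarrow> {} \<in> L"

definition proper_flats :: "'e set \<Rightarrow> 'e set set \<Rightarrow> 'e set set" where
  "proper_flats E L = L - {{}, E}"

type_synonym 'e chowpoly = "('e set \<Rightarrow>\<^sub>0 nat) \<Rightarrow>\<^sub>0 int"

definition Xv :: "'e set \<Rightarrow> 'e chowpoly" where
  "Xv F = Poly_Mapping.single (Poly_Mapping.single F 1) 1"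

inductive_set ideal_gen :: "'a::comm_ring_1 set \<Rightarrow> 'a set" for S where
  zero: "0 \<in> ideal_gen S"
| step: "g \<in> S \<Longrightarrow> x \<in> ideal_gen S \<Longrightarrow> r * g + x \<in> ideal_gen S"

definition chow_relations :: "'e set \<Rightarrow> 'e set set \<Rightarrow> 'e chowpoly set" where
  "chow_relations E L =
     {Xv F1 * Xv F2 | F1 F2. F1 \<in> proper_flats E L \<and> F2 \<in> proper_flats E L
                            \<and> \<not> F1 \<subseteq> F2 \<and> \<not> F2 \<subseteq> F1}
   \<union> {(\<Sum>F\<in>{F\<in>proper_flats E L. e \<in> F}. Xv F) - (\<Sum>F\<in>{F\<in>proper_flats E L. f \<in> F}. Xv F)
       | e f. e \<in> E \<and> f \<in> E}"

definition chow_eq :: "'e set \<Rightarrow> 'e set set \<Rightarrow> 'e chowpoly \<Rightarrow> 'e chowpoly \<Rightarrow> bool" where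
  "chow_eq E L p q \<longleftrightarrow> p - q \<in> ideal_gen (chow_relations E L)"

section \<open>psi classes (representatives; independent of the chosen e)\<close>

definition psi_minus :: "'e set \<Rightarrow> 'e set set \<Rightarrow> 'e set \<Rightarrow> 'e chowpoly" where
  "psi_minus E L F = (let e = (SOME e. e \<in> E) in
     (\<Sum>G\<in>{G\<in>proper_flats E L. e \<in> G}. Xv G) - (\<Sum>G\<in>{G\<in>proper_flats E L. F \<subseteq> G}. Xv G))"

definition psi_plus :: "'e set \<Rightarrow> 'e set set \<Rightarrow> 'e set \<Rightarrow> 'e chowpoly" where
  "psi_plus E L F = (let e = (SOME e. e \<in> E) in
     (\<Sum>G\<in>{G\<in>proper_flats E L. e \<notin> G}. Xv G) - (\<Sum>G\<in>{G\<in>proper_flats E L. G \<subseteq> F}. Xv G))"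

end

theory Submission
  imports Defs "HOL.Modules"
begin

(* Unfolding the definitions, -psi_F^- - psi_F^+ = X_F - b_F already holds for the polynomials,
   where b_F is the sum of X_G over the proper flats G incomparable with F: the sums over
   e in G and over e not in G together run over all proper flats, and the sums over G containing F
   and over G contained in F run over the flats comparable with F, counting F twice.
   Each X_F X_G with G incomparable with F is a generator of the ideal, so X_F b_F = 0 in A*(M)
   and hence X_F^d = X_F (X_F - b_F)^(d-1) for d >= 1. Multiplying these identities over the F_i
   gives the flag formula, which thus holds without the flag hypothesis; of the matroid
   axioms only finiteness of E is used.
   If F_i and F_j are incomparable, X_(F_i) X_(F_j) divides the monomial, which therefore lies
   in the ideal. *)

interpretation ring_self: module "(*) :: 'a::comm_ring_1 \<Rightarrow> 'a \<Rightarrow> 'a"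
  by unfold_locales (simp_all add: algebra_simps)

lemma ideal_gen_eq_span: "ideal_gen S = ring_self.span S"
proof (intro subset_antisym subsetI)
  show "x \<in> ring_self.span S" if "x \<in> ideal_gen S" for x
    using that
    by induction
      (simp_all add: ring_self.span_zero ring_self.span_add ring_self.span_scale ring_self.span_base)
  show "x \<in> ideal_gen S" if "x \<in> ring_self.span S" for x
    using that
    by (induction rule: ring_self.span_induct_alt) (simp_all add: ideal_gen.zero ideal_gen.step)
qed

lemma ideal_gen_dvd: "x \<in> ideal_gen S \<Longrightarrow> x dvd y \<Longrightarrow> y \<in> ideal_gen S"
  by (metis dvdE ideal_gen_eq_span mult.commute ring_self.span_scale)

lemma ideal_gen_prod_diff:
  assumes "finite A" and "\<And>a. a \<in> A \<Longrightarrow> f a - g a \<in> ideal_gen S"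
  shows "prod f A - prod g A \<in> ideal_gen S"
  using assms
proof (induction A rule: finite_induct)
  case empty
  then show ?case by (simp add: ideal_gen.zero)
next
  case (insert a A)
  have "prod f (insert a A) - prod g (insert a A)
      = prod f A * (f a - g a) + g a * (prod f A - prod g A)"
    using insert.hyps by (simp add: algebra_simps)
  then show ?case
    using insert by (simp add: ideal_gen_eq_span ring_self.span_add ring_self.span_scale)
qed

lemma power_Suc_diff_in_ideal_gen:
  assumes "a * b \<in> ideal_gen S"
  shows "a ^ Suc n - a * (a - b) ^ n \<in> ideal_gen S"
proof (rule ideal_gen_dvd[OF assms])
  have "a ^ Suc n - a * (a - b) ^ n = a * (a ^ n - (a - b) ^ n)"
    by (simp add: algebra_simps)
  also have "\<dots> = a * b * (\<Sum>i<n. (a - b) ^ (n - Suc i) * a ^ i)"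
    by (simp add: power_diff_sumr2[of a n "a - b"])
  finally show "a * b dvd a ^ Suc n - a * (a - b) ^ n"
    by simp
qed

lemma sum_filter_add_sum_filter_not:
  "finite A \<Longrightarrow> sum g {x\<in>A. P x} + sum g {x\<in>A. \<not> P x} = sum g A"
  using sum.Int_Diff[of A g "{x. P x}"] by (simp add: Int_def set_diff_eq conj_commute add.commute)

lemma finite_proper_flats: "matroid_flats E L \<Longrightarrow> finite (proper_flats E L)"
  unfolding matroid_flats_def proper_flats_def by (meson finite_Diff finite_Pow_iff finite_subset)

lemma Xv_mult_incomparable_in_ideal_gen:
  assumes "F \<in> proper_flats E L" and "G \<in> proper_flats E L" and "\<not> F \<subseteq> G" and "\<not> G \<subseteq> F"
  shows "Xv F * Xv G \<in> ideal_gen (chow_relations E L)"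
proof -
  have "Xv F * Xv G \<in> chow_relations E L"
    unfolding chow_relations_def using assms by blast
  then show ?thesis
    by (simp add: ideal_gen_eq_span ring_self.span_base)
qed

lemma neg_psi_minus_diff_psi_plus:
  assumes fin: "finite (proper_flats E L)" and F: "F \<in> proper_flats E L"
  shows "- psi_minus E L F - psi_plus E L F
       = Xv F - (\<Sum>G\<in>{G\<in>proper_flats E L. \<not> F \<subseteq> G \<and> \<not> G \<subseteq> F}. Xv G)"
proof -
  define P where "P = proper_flats E L"
  define e where "e = (SOME e. e \<in> E)"
  have e_split: "(\<Sum>G\<in>{G\<in>P. e \<in> G}. Xv G) + (\<Sum>G\<in>{G\<in>P. e \<notin> G}. Xv G) = (\<Sum>G\<in>P. Xv G)"
    using sum_filter_add_sum_filter_not[of P Xv "\<lambda>G. e \<in> G"] fin by (simp add: P_def)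
  have "{G\<in>P. F \<subseteq> G} \<inter> {G\<in>P. G \<subseteq> F} = {F}"
    using F by (auto simp: P_def)
  then have comparable_split: "(\<Sum>G\<in>{G\<in>P. F \<subseteq> G}. Xv G) + (\<Sum>G\<in>{G\<in>P. G \<subseteq> F}. Xv G)
      = (\<Sum>G\<in>{G\<in>P. F \<subseteq> G \<or> G \<subseteq> F}. Xv G) + Xv F"
    using sum.union_inter[of "{G\<in>P. F \<subseteq> G}" "{G\<in>P. G \<subseteq> F}" Xv] fin
    by (simp add: P_def Collect_disj_eq[symmetric] conj_disj_distribL)
  have comparable_compl: "(\<Sum>G\<in>{G\<in>P. F \<subseteq> G \<or> G \<subseteq> F}. Xv G)
      + (\<Sum>G\<in>{G\<in>P. \<not> F \<subseteq> G \<and> \<not> G \<subseteq> F}. Xv G) = (\<Sum>G\<in>P. Xv G)"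
    using sum_filter_add_sum_filter_not[of P Xv "\<lambda>G. F \<subseteq> G \<or> G \<subseteq> F"] fin by (simp add: P_def)
  show ?thesis
    unfolding psi_minus_def psi_plus_def Let_def e_def[symmetric] P_def[symmetric]
    using e_split comparable_split comparable_compl by (simp add: algebra_simps)
qed

lemma chow_eq_Xv_power:
  assumes M: "matroid_flats E L" and F: "F \<in> proper_flats E L" and "d > 0"
  shows "chow_eq E L (Xv F ^ d) (Xv F * (- psi_minus E L F - psi_plus E L F) ^ (d - 1))"
proof -
  define I where "I = {G\<in>proper_flats E L. \<not> F \<subseteq> G \<and> \<not> G \<subseteq> F}"
  have "Xv F * (\<Sum>G\<in>I. Xv G) = (\<Sum>G\<in>I. Xv F * Xv G)"
    by (simp add: sum_distrib_left)
  also have "\<dots> \<in> ideal_gen (chow_relations E L)"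
    using Xv_mult_incomparable_in_ideal_gen[OF F]
    by (auto simp: I_def ideal_gen_eq_span intro: ring_self.span_sum)
  finally have "Xv F ^ Suc (d - 1) - Xv F * (Xv F - (\<Sum>G\<in>I. Xv G)) ^ (d - 1)
      \<in> ideal_gen (chow_relations E L)"
    by (rule power_Suc_diff_in_ideal_gen)
  then show ?thesis
    using \<open>d > 0\<close> neg_psi_minus_diff_psi_plus[OF finite_proper_flats[OF M] F]
    by (simp add: chow_eq_def I_def)
qed

lemma chow_eq_prod:
  "finite A \<Longrightarrow> (\<And>a. a \<in> A \<Longrightarrow> chow_eq E L (f a) (g a)) \<Longrightarrow> chow_eq E L (prod f A) (prod g A)"
  unfolding chow_eq_def by (rule ideal_gen_prod_diff)

lemma chow_eq_prod_Xv_power_incomparable: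
  assumes "finite A" and "i \<in> A" and "j \<in> A"
    and "F i \<in> proper_flats E L" and "F j \<in> proper_flats E L"
    and "\<not> F i \<subseteq> F j" and "\<not> F j \<subseteq> F i" and "d i > 0" and "d j > 0"
  shows "chow_eq E L (\<Prod>l\<in>A. Xv (F l) ^ d l) 0"
proof -
  have "i \<noteq> j" using assms(6) by blast
  have "Xv (F i) * Xv (F j) dvd Xv (F i) ^ d i * Xv (F j) ^ d j"
    using assms(8,9) by (simp add: mult_dvd_mono)
  also have "\<dots> = (\<Prod>l\<in>{i, j}. Xv (F l) ^ d l)"
    using \<open>i \<noteq> j\<close> by simp
  also have "\<dots> dvd (\<Prod>l\<in>A. Xv (F l) ^ d l)"
    using assms(1-3) by (simp add: prod_dvd_prod_subset)
  finally show ?thesis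
    using Xv_mult_incomparable_in_ideal_gen[OF assms(4-7)]
    by (simp add: chow_eq_def ideal_gen_dvd)
qed

theorem corollary3p4:
  fixes E :: "'e set" and L :: "'e set set"
    and k :: nat and F :: "nat \<Rightarrow> 'e set" and d :: "nat \<Rightarrow> nat"
  assumes "matroid_flats E L" and "loopless E L"
    and "\<forall>i<k. F i \<in> proper_flats E L"
    and "inj_on F {..<k}"
    and "\<forall>i<k. d i > 0"
  shows "((\<exists>\<sigma>. bij_betw \<sigma> {..<k} {..<k} \<and> (\<forall>i j. i < j \<and> j < k \<longrightarrow> F (\<sigma> i) \<subset> F (\<sigma> j)))
           \<longrightarrow> chow_eq E L (\<Prod>i<k. Xv (F i) ^ d i)
                 ((\<Prod>i<k. Xv (F i)) *
                  (\<Prod>i<k. (- psi_minus E L (F i) - psi_plus E L (F i)) ^ (d i - 1))))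
       \<and> ((\<exists>i<k. \<exists>j<k. \<not> F i \<subseteq> F j \<and> \<not> F j \<subseteq> F i)
           \<longrightarrow> chow_eq E L (\<Prod>i<k. Xv (F i) ^ d i) 0)"
proof (intro conjI impI)
  show "chow_eq E L (\<Prod>i<k. Xv (F i) ^ d i)
          ((\<Prod>i<k. Xv (F i)) *
           (\<Prod>i<k. (- psi_minus E L (F i) - psi_plus E L (F i)) ^ (d i - 1)))"
    unfolding prod.distrib[symmetric]
    using assms(3,5) by (intro chow_eq_prod chow_eq_Xv_power[OF assms(1)]) simp_all
  assume "\<exists>i<k. \<exists>j<k. \<not> F i \<subseteq> F j \<and> \<not> F j \<subseteq> F i"
  then obtain i j where "i < k" "j < k" "\<not> F i \<subseteq> F j" "\<not> F j \<subseteq> F i"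
    by blast
  then show "chow_eq E L (\<Prod>i<k. Xv (F i) ^ d i) 0"
    using assms(3,5) by (intro chow_eq_prod_Xv_power_incomparable) auto
qed

end
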